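(* Let $1\le k\le n$ and $(\pi,S)\in\mathcal{B}^{>}_{n-1,k-1}$. Then (a) $\mathrm{fmaj}(\phi^{*}_{n,k}(i,(\pi,S)))=\mathrm{fmaj}((\pi,S))+2i-1$ for every $i\in\{1,\dots,n-k\}$; (b) $\mathrm{fmaj}(\phi^{*}_{\overline{n},k}(i,(\pi,S)))=\mathrm{fmaj}((\pi,S))+2i-2$ for every $i\in\{1,\dots,n-k\}$; (c) $\mathrm{fmaj}(\phi^{*}_{\overline{n},k}(0,(\pi,S)))=\mathrm{fmaj}((\pi,S))+2n-2k$.
   Context: $\mathcal{B}_m$ is the group of signed permutations of $[m]$ (bijections $\pi$ of $\{\pm1,\dots,\pm m\}$ with $\pi(-i)=-\pi(i)$, written $\pi=\pi_1\cdots\pi_m$), integers ordered naturally, $\overline{x}=-x$. Set $\pi_0=0$; $\mathrm{Des}_B(\pi)=\{i\in\{0,\dots,m-1\}:\pi_i>\pi_{i+1}\}$, $\mathrm{neg}(\pi)=|\{i:\pi_i<0\}|$, $\mathrm{fmaj}(\pi)=\sum_{i\in\mathrm{Des}_B(\pi)}2i+\mathrm{neg}(\pi)$. Let $\mathcal{B}^{>}_{m,k}=\{(\pi,S):\pi\in\mathcal{B}_m,\ S\subseteq\mathrm{Des}_B(\pi),\ |S|=k\}$ and for $(\pi,S)\in\mathcal{B}^{>}_{m,k}$, $\mathrm{fmaj}((\pi,S))=\mathrm{fmaj}(\pi)-\sum_{j\in S}\bigl(2|\mathrm{Des}_B(\pi)\cap\{j,\dots,m-1\}|-1\bigr)$.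 Positions: for $p\in\{0,\dots,m\}$, position $p$ is the space immediately after $\pi_p$. The fmaj-labelling of $(\pi,S)\in\mathcal{B}^{>}_{m,k}$ labels positions not in $S$: position $m$ gets label $0$; positions in $\mathrm{Des}_B(\pi)\setminus S$ get labels $1,2,\dots$ from right to left; remaining positions in $\{0,\dots,m-1\}\setminus\mathrm{Des}_B(\pi)$ get the next consecutive labels from left to right (labels $0,\dots,m-k$). For $\alpha\in\{n,\overline{n}\}$, $(\pi,S)\in\mathcal{B}^{>}_{n-1,k-1}$ and a label $i$, let $p$ be the position with label $i$, $\tau=\pi_1\cdots\pi_p\,\alpha\,\pi_{p+1}\cdots\pi_{n-1}\in\mathcal{B}_n$; starred positions $j\in S$ with $j<p$ stay at $j$, each starred $j\in S$ with $j>p$ is replaced by the largest element of $\mathrm{Des}_B(\tau)$ smaller than $j+1$; finally the largest element of $\mathrm{Des}_B(\tau)$ is added to the set of starred positions, giving $T$. Define $\phi^{*}_{\alpha,k}(i,(\pi,S))=(\tau,T)$; this gives maps $\phi^{*}_{n,k}:\{1,\dots,n-k\}\times\mathcal{B}^{>}_{n-1,k-1}\to\mathcal{B}^{>}_{n,k}$ and $\phi^{*}_{\overline{n},k}:\{0,1,\dots,n-k\}\times\mathcal{B}^{>}_{n-1,k-1}\to\mathcal{B}^{>}_{n,k}$. *)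

theory Defs
  imports Main
begin

text \<open>A signed permutation of [m] is represented by its window pi_1 ... pi_m, an int list.
Positions are natural numbers 0..m.\<close>

definition signed_perms :: "nat \<Rightarrow> int list set" where
  "signed_perms m = {xs. length xs = m \<and> distinct (map abs xs) \<and> abs ` set xs = {1..int m}}"

definition pval :: "int list \<Rightarrow> nat \<Rightarrow> int" where
  "pval xs i = (if i = 0 then 0 else xs ! (i - 1))"

definition desB :: "int list \<Rightarrow> nat set" where
  "desB xs = {i. i < length xs \<and> pval xs i > pval xs (Suc i)}"

definition negB :: "int list \<Rightarrow> nat" where
  "negB xs = card {i. i < length xs \<and> xs ! i < 0}"

definition fmaj :: "int list \<Rightarrow> int" where
  "fmaj xs = int (\<Sum>i\<in>desB xs. 2 * i) + int (negB xs)"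

definition Bgt :: "nat \<Rightarrow> nat \<Rightarrow> (int list \<times> nat set) set" where
  "Bgt m k = {(xs, S). xs \<in> signed_perms m \<and> S \<subseteq> desB xs \<and> card S = k}"

definition fmajS :: "int list \<times> nat set \<Rightarrow> int" where
  "fmajS P = (case P of (xs, S) \<Rightarrow>
     fmaj xs - (\<Sum>j\<in>S. 2 * int (card (desB xs \<inter> {j..<length xs})) - 1))"

definition fmaj_label :: "int list \<Rightarrow> nat set \<Rightarrow> nat \<Rightarrow> nat" where
  "fmaj_label xs S p =
     (if p = length xs then 0
      else if p \<in> desB xs - S then card {q \<in> desB xs - S. p \<le> q}
      else card (desB xs - S) + card {q. q < length xs \<and> q \<notin> desB xs \<and> q \<le> p})"

definition label_pos :: "int list \<Rightarrow> nat set \<Rightarrow> nat \<Rightarrow> nat" where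
  "label_pos xs S i = (THE p. p \<le> length xs \<and> p \<notin> S \<and> fmaj_label xs S p = i)"

text \<open>The map phi*_{alpha,k}(i,(pi,S)); it does not depend on k except through its domain.\<close>
definition phi_star :: "int \<Rightarrow> nat \<Rightarrow> int list \<times> nat set \<Rightarrow> int list \<times> nat set" where
  "phi_star \<alpha> i P = (case P of (xs, S) \<Rightarrow>
     (let p = label_pos xs S i;
          \<tau> = take p xs @ [\<alpha>] @ drop p xs;
          T = {j \<in> S. j < p}
              \<union> (\<lambda>j. Max {d \<in> desB \<tau>. d < j + 1}) ` {j \<in> S. p < j}
              \<union> {Max (desB \<tau>)}
      in (\<tau>, T)))"

end

theory Submission
  imports Defs
begin

(* Inserting the letter n or -n, which exceeds every letter of pi in absolute value, after
   position p shifts the descents above p by one, drops p as a descent (if it was one) and creates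
   exactly one new descent: at p + 1 for n, at p for -n.  Each starred descent j > p is re-starred at the descent of tau preceding j + 1, which
   has one more descent to its right than j had, and the newly starred descent is the last one.
   Summing these changes, fmaj((pi,S)) grows by 2w - 1 for n and by 2w - 2 for -n, where w is
   essentially the fmaj-label of p. *)

lemma pval_insert:
  assumes "p \<le> length xs"
  shows "pval (take p xs @ a # drop p xs) q =
    (if q \<le> p then pval xs q else if q = Suc p then a else pval xs (q - 1))"
  using assms by (auto simp: pval_def nth_append min_def nth_drop numeral_2_eq_2)

lemma desB_subset: "desB xs \<subseteq> {..<length xs}"
  by (auto simp: desB_def)

lemma finite_desB [simp]: "finite (desB xs)"
  using desB_subset finite_subset by blast

definition des_insert :: "nat set \<Rightarrow> nat \<Rightarrow> nat \<Rightarrow> nat set" where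
  "des_insert D p c = {d \<in> D. d < p} \<union> {c} \<union> Suc ` {d \<in> D. p < d}"

lemma desB_insert:
  assumes p: "p \<le> length xs" and a: "a \<noteq> 0" "\<forall>x\<in>set xs. \<bar>x\<bar> < \<bar>a\<bar>"
    and end_pos: "0 < a \<Longrightarrow> p < length xs"
  shows "desB (take p xs @ a # drop p xs) = des_insert (desB xs) p (if 0 < a then Suc p else p)"
proof (rule set_eqI)
  fix q
  have small: "\<bar>pval xs r\<bar> < \<bar>a\<bar>" if "r \<le> length xs" for r
    using that a by (auto simp: pval_def)
  consider "q < p" | "q = p" | "q = Suc p" | "Suc p < q"
    by linarith
  then show "q \<in> desB (take p xs @ a # drop p xs) \<longleftrightarrow>
      q \<in> des_insert (desB xs) p (if 0 < a then Suc p else p)"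
  proof cases
    case 1
    then show ?thesis
      using p by (auto simp: desB_def des_insert_def pval_insert)
  next
    case 2
    then show ?thesis
      using p small[of p] by (auto simp: desB_def des_insert_def pval_insert)
  next
    case 3
    then show ?thesis
      using p end_pos small[of "Suc p"] by (auto simp: desB_def des_insert_def pval_insert)
  next
    case 4
    then have "q \<in> Suc ` {d \<in> desB xs. p < d} \<longleftrightarrow> q - 1 \<in> desB xs"
      by (auto simp: image_iff intro!: bexI[of _ "q - 1"])
    with 4 show ?thesis
      using p by (auto simp: desB_def des_insert_def pval_insert)
  qed
qed

lemma split_less_greater:
  fixes p :: "'a::linorder"
  shows "p \<notin> S \<Longrightarrow> S = {j \<in> S. j < p} \<union> {j \<in> S. p < j}"
  by (auto simp: not_less less_le)

lemma sum_des_insert: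
  fixes f :: "nat \<Rightarrow> 'a::comm_monoid_add"
  assumes "finite D" "p \<le> c" "c \<le> Suc p"
  shows "(\<Sum>d\<in>des_insert D p c. f d) + (if p \<in> D then f p else 0)
       = (\<Sum>d\<in>D. if p < d then f (Suc d) else f d) + f c"
proof -
  have "(\<Sum>d\<in>des_insert D p c. f d)
      = (\<Sum>d\<in>{d \<in> D. d < p}. f d) + f c + (\<Sum>d\<in>{d \<in> D. p < d}. f (Suc d))"
  proof -
    have "c \<notin> {d \<in> D. d < p} \<union> Suc ` {d \<in> D. p < d}"
      using assms by auto
    moreover have "{d \<in> D. d < p} \<inter> Suc ` {d \<in> D. p < d} = {}"
      by auto
    ultimately show ?thesis
      using assms(1) by (simp add: des_insert_def sum.union_disjoint sum.reindex ac_simps)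
  qed
  moreover have "(\<Sum>d\<in>D. if p < d then f (Suc d) else f d)
      = (\<Sum>d\<in>{d \<in> D. p < d}. f (Suc d)) + (\<Sum>d\<in>{d \<in> D. \<not> p < d}. f d)"
    using assms(1) by (simp add: sum.If_cases Int_def)
  moreover have "{d \<in> D. \<not> p < d} = {d \<in> D. d < p} \<union> ({p} \<inter> D)"
    by auto
  then have "(\<Sum>d\<in>{d \<in> D. \<not> p < d}. f d) = (\<Sum>d\<in>{d \<in> D. d < p}. f d) + (if p \<in> D then f p else 0)"
    using assms(1) by (simp add: sum.union_disjoint add.commute)
  ultimately show ?thesis
    by (simp add: ac_simps)
qed

definition count_ge :: "nat set \<Rightarrow> nat \<Rightarrow> nat" where
  "count_ge D j = card {d \<in> D. j \<le> d}"

lemma count_ge_eq_sum: "finite D \<Longrightarrow> count_ge D j = (\<Sum>d\<in>D. if j \<le> d then 1 else 0)"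
  unfolding count_ge_def card_eq_sum by (rule sum.inter_filter)

lemma finite_des_insert [simp]: "finite D \<Longrightarrow> finite (des_insert D p c)"
  by (simp add: des_insert_def)

lemma count_ge_des_insert_below:
  assumes "finite D" "p \<le> c" "c \<le> Suc p" "j < p"
  shows "count_ge (des_insert D p c) j = count_ge D j + (if p \<in> D then 0 else 1)"
proof -
  have "(\<Sum>d\<in>D. if p < d then (if j \<le> Suc d then 1 else 0) else if j \<le> d then 1 else 0)
      = (\<Sum>d\<in>D. if j \<le> d then 1 else (0::nat))"
    using assms(4) by (intro sum.cong) auto
  then show ?thesis
    using sum_des_insert[OF assms(1-3), of "\<lambda>d. if j \<le> d then 1 else (0::nat)"] assms
    by (simp add: count_ge_eq_sum split: if_splits)
qed

lemma count_ge_des_insert_above: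
  assumes "finite D" "p \<le> c" "c \<le> Suc p" "p < j"
  shows "count_ge (des_insert D p c) (Suc j) = count_ge D j"
proof -
  have "(\<Sum>d\<in>D. if p < d then (if Suc j \<le> Suc d then 1 else 0) else if Suc j \<le> d then 1 else 0)
      = (\<Sum>d\<in>D. if j \<le> d then 1 else (0::nat))"
    using assms(4) by (intro sum.cong) auto
  then show ?thesis
    using sum_des_insert[OF assms(1-3), of "\<lambda>d. if Suc j \<le> d then 1 else (0::nat)"] assms
    by (simp add: count_ge_eq_sum split: if_splits)
qed

lemma Max_less_Suc:
  fixes X :: "nat set"
  assumes "finite X" "x \<in> X" "x \<le> j"
  shows "Max {d \<in> X. d < j + 1} \<in> X" "Max {d \<in> X. d < j + 1} \<le> j"
    and "\<And>d. d \<in> X \<Longrightarrow> d \<le> j \<Longrightarrow> d \<le> Max {d \<in> X. d < j + 1}"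
proof -
  have fin: "finite {d \<in> X. d < j + 1}" and ne: "{d \<in> X. d < j + 1} \<noteq> {}"
    using assms by auto
  show "Max {d \<in> X. d < j + 1} \<in> X" "Max {d \<in> X. d < j + 1} \<le> j"
    using Max_in[OF fin ne] by auto
  show "d \<le> Max {d \<in> X. d < j + 1}" if "d \<in> X" "d \<le> j" for d
    using Max_ge[OF fin] that by simp
qed

lemma strict_mono_on_Max_less_Suc:
  fixes X :: "nat set"
  assumes "finite X" "x \<in> X" "\<And>j. j \<in> B \<Longrightarrow> x \<le> j" "\<And>j. j \<in> B \<Longrightarrow> Suc j \<in> X"
  shows "strict_mono_on B (\<lambda>j. Max {d \<in> X. d < j + 1})"
proof (rule strict_mono_onI)
  fix j j'
  assume "j \<in> B" "j' \<in> B" "j < j'"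
  then show "Max {d \<in> X. d < j + 1} < Max {d \<in> X. d < j' + 1}"
    using Max_less_Suc(2)[OF assms(1,2), of j] Max_less_Suc(3)[OF assms(1,2), of j' "Suc j"]
      assms(3,4)
    by fastforce
qed

lemma count_ge_Max_less_Suc:
  assumes "finite X" "x \<in> X" "x \<le> j"
  shows "count_ge X (Max {d \<in> X. d < j + 1}) = Suc (count_ge X (Suc j))"
proof -
  let ?m = "Max {d \<in> X. d < j + 1}"
  note m = Max_less_Suc[OF assms]
  have "{d \<in> X. ?m \<le> d} = insert ?m {d \<in> X. Suc j \<le> d}"
    using m by (auto simp: not_less_eq_eq[symmetric] intro: le_antisym)
  with m(2) assms(1) show ?thesis
    by (simp add: count_ge_def)
qed

lemma count_ge_Max:
  assumes "finite X" "X \<noteq> {}"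
  shows "count_ge X (Max X) = 1"
proof -
  have "{d \<in> X. Max X \<le> d} = {Max X}"
    using assms by (auto intro: antisym Max_ge Max_in)
  then show ?thesis
    by (simp add: count_ge_def)
qed

lemma Max_less_Suc_des_insert:
  assumes fin: "finite D" and c: "p \<le> c" "c \<le> Suc p" and j: "j \<in> D" "p < j"
  defines "D' \<equiv> des_insert D p c"
  shows "c \<le> Max {d \<in> D'. d < j + 1}" "Max {d \<in> D'. d < j + 1} < Max D'"
    and "count_ge D' (Max {d \<in> D'. d < j + 1}) = Suc (count_ge D j)"
proof -
  have finD': "finite D'" and cD': "c \<in> D'" and "Suc j \<in> D'"
    using fin j by (auto simp: D'_def des_insert_def)
  have "c \<le> j"
    using c j by simp
  show "c \<le> Max {d \<in> D'. d < j + 1}"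
    using Max_less_Suc(3)[OF finD' cD' \<open>c \<le> j\<close> cD' \<open>c \<le> j\<close>] .
  have "Suc j \<le> Max D'"
    using finD' \<open>Suc j \<in> D'\<close> by simp
  then show "Max {d \<in> D'. d < j + 1} < Max D'"
    using Max_less_Suc(2)[OF finD' cD' \<open>c \<le> j\<close>] by linarith
  show "count_ge D' (Max {d \<in> D'. d < j + 1}) = Suc (count_ge D j)"
    using count_ge_Max_less_Suc[OF finD' cD' \<open>c \<le> j\<close>] count_ge_des_insert_above[OF fin c j(2)]
    by (simp add: D'_def)
qed

lemma star_sum_des_insert:
  fixes D S :: "nat set"
  assumes fin: "finite D" and S: "S \<subseteq> D" "p \<notin> S" and c: "p \<le> c" "c \<le> Suc p"
  defines "D' \<equiv> des_insert D p c"
  shows "(\<Sum>j \<in> {j \<in> S. j < p} \<union> (\<lambda>j. Max {d \<in> D'. d < j + 1}) ` {j \<in> S. p < j} \<union> {Max D'}.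
            2 * int (count_ge D' j) - 1)
       = (\<Sum>j\<in>S. 2 * int (count_ge D j) - 1)
         + 2 * (if p \<in> D then 0 else 1) * int (card {j \<in> S. j < p}) + 2 * int (card {j \<in> S. p < j}) + 1"
proof -
  define f where "f j = Max {d \<in> D'. d < j + 1}" for j
  define A where "A = {j \<in> S. j < p}"
  define B where "B = {j \<in> S. p < j}"
  define g where "g X j = 2 * int (count_ge X j) - 1" for X j
  let ?M = "Max D'"
  have finD': "finite D'" and cD': "c \<in> D'"
    using fin by (auto simp: D'_def des_insert_def)
  have finS: "finite A" "finite B"
    using finite_subset[OF S(1) fin] by (auto simp: A_def B_def)
  have B: "j \<in> D" "p < j" "c \<le> j" if "j \<in> B" for j
    using that S(1) c by (auto simp: B_def)
  have f_B: "c \<le> f j" "f j < ?M" "count_ge D' (f j) = Suc (count_ge D j)" if "j \<in> B" for j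
    using Max_less_Suc_des_insert[OF fin c B(1,2)[OF that]] by (simp_all add: f_def D'_def)
  have "inj_on f B"
    unfolding f_def D'_def
    by (rule strict_mono_on_imp_inj_on, rule strict_mono_on_Max_less_Suc)
      (use fin B in \<open>auto simp: des_insert_def\<close>)
  then have "sum (g D') (f ` B) = (\<Sum>j\<in>B. g D j + 2)"
    using f_B(3) by (simp add: sum.reindex g_def)
  moreover have "sum (g D') A = (\<Sum>j\<in>A. g D j + 2 * (if p \<in> D then 0 else 1))"
    using count_ge_des_insert_below[OF fin c] by (intro sum.cong) (auto simp: g_def A_def D'_def)
  moreover have "g D' ?M = 1"
    using count_ge_Max[OF finD'] cD' by (auto simp: g_def)
  moreover have "A \<inter> (f ` B \<union> {?M}) = {}"
  proof -
    have "j < c" if "j \<in> A" for j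
      using that c by (auto simp: A_def)
    then show ?thesis
      using f_B(1) Max_ge[OF finD' cD'] by fastforce
  qed
  moreover have "f ` B \<inter> {?M} = {}"
    using f_B(2) by fastforce
  moreover have "sum (g D) S = sum (g D) A + sum (g D) B"
    using finS
    by (subst split_less_greater[OF S(2)]) (auto simp: A_def B_def intro: sum.union_disjoint)
  ultimately have "sum (g D') (A \<union> f ` B \<union> {?M})
      = sum (g D) S + 2 * (if p \<in> D then 0 else 1) * int (card A) + 2 * int (card B) + 1"
    using finS by (simp add: sum.union_disjoint Un_assoc sum.distrib)
  then show ?thesis
    by (simp add: A_def B_def f_def g_def)
qed

lemma negB_insert: "negB (take p xs @ a # drop p xs) = negB xs + (if a < 0 then 1 else 0)"
proof -
  have negB_filter: "negB ys = length (filter (\<lambda>x. x < 0) ys)" for ys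
    by (simp add: negB_def length_filter_conv_card)
  have "length (filter (\<lambda>x. x < 0) xs)
      = length (filter (\<lambda>x. x < 0) (take p xs)) + length (filter (\<lambda>x. x < 0) (drop p xs))"
    by (metis append_take_drop_id filter_append length_append)
  then show ?thesis
    by (simp add: negB_filter)
qed

lemma fmaj_insert:
  assumes "p \<le> length xs" "a \<noteq> 0" "\<forall>x\<in>set xs. \<bar>x\<bar> < \<bar>a\<bar>" "0 < a \<Longrightarrow> p < length xs"
  defines "c \<equiv> if 0 < a then Suc p else p"
  shows "fmaj (take p xs @ a # drop p xs) + (if p \<in> desB xs then 2 * int p else 0)
       = fmaj xs + 2 * int c + 2 * int (card {d \<in> desB xs. p < d}) + (if a < 0 then 1 else 0)"
proof -
  let ?D = "desB xs"
  have "(\<Sum>d\<in>des_insert ?D p c. d) + (if p \<in> ?D then p else 0)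
      = (\<Sum>d\<in>?D. if p < d then Suc d else d) + c"
    by (rule sum_des_insert) (auto simp: c_def)
  also have "(\<Sum>d\<in>?D. if p < d then Suc d else d) = (\<Sum>d\<in>?D. d + (if p < d then 1 else 0))"
    by (rule sum.cong) auto
  also have "\<dots> = (\<Sum>d\<in>?D. d) + card {d \<in> ?D. p < d}"
    by (simp add: sum.distrib flip: sum.inter_filter)
  finally have "int (\<Sum>d\<in>des_insert ?D p c. 2 * d) + (if p \<in> ?D then 2 * int p else 0)
      = int (\<Sum>d\<in>?D. 2 * d) + 2 * int c + 2 * int (card {d \<in> ?D. p < d})"
    by (simp del: of_nat_sum flip: sum_distrib_left split: if_splits)
  then show ?thesis
    using desB_insert[OF assms(1-4), folded c_def]
    by (simp add: fmaj_def negB_insert split: if_splits)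
qed

lemma fmajS_eq_count_ge:
  "fmajS (xs, S) = fmaj xs - (\<Sum>j\<in>S. 2 * int (count_ge (desB xs) j) - 1)"
proof -
  have "desB xs \<inter> {j..<length xs} = {d \<in> desB xs. j \<le> d}" for j
    using desB_subset[of xs] by auto
  then show ?thesis
    by (simp add: fmajS_def count_ge_def)
qed

definition insert_letter :: "int \<Rightarrow> nat \<Rightarrow> int list \<times> nat set \<Rightarrow> int list \<times> nat set" where
  "insert_letter a p P = (case P of (xs, S) \<Rightarrow>
     (let \<tau> = take p xs @ a # drop p xs
      in (\<tau>, {j \<in> S. j < p} \<union> (\<lambda>j. Max {d \<in> desB \<tau>. d < j + 1}) ` {j \<in> S. p < j}
             \<union> {Max (desB \<tau>)})))"

lemma phi_star_eq_insert_letter: "phi_star a i (xs, S) = insert_letter a (label_pos xs S i) (xs, S)"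
  by (simp add: phi_star_def insert_letter_def Let_def)

(* Equals the fmaj-label of p for p < m (fmaj_label_eq_ins_weight); at p = m it is
   m + 1 - |S| rather than 0. *)
definition ins_weight :: "int list \<Rightarrow> nat set \<Rightarrow> nat \<Rightarrow> int" where
  "ins_weight xs S p =
     (if p \<in> desB xs then 1 + int (card {d \<in> desB xs. p < d}) - int (card {j \<in> S. p < j})
      else int p + 1 + int (card {d \<in> desB xs. p < d}) - int (card S))"

lemma fmajS_insert_letter:
  assumes S: "S \<subseteq> desB xs" "p \<notin> S"
    and a: "p \<le> length xs" "a \<noteq> 0" "\<forall>x\<in>set xs. \<bar>x\<bar> < \<bar>a\<bar>" "0 < a \<Longrightarrow> p < length xs"
  shows "fmajS (insert_letter a p (xs, S))
       = fmajS (xs, S) + 2 * ins_weight xs S p - (if 0 < a then 1 else 2)"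
proof -
  define c where "c = (if 0 < a then Suc p else p)"
  let ?\<tau> = "take p xs @ a # drop p xs"
  have des: "desB ?\<tau> = des_insert (desB xs) p c"
    using desB_insert[OF a] by (simp add: c_def)
  have star: "(\<Sum>j \<in> snd (insert_letter a p (xs, S)). 2 * int (count_ge (desB ?\<tau>) j) - 1)
      = (\<Sum>j\<in>S. 2 * int (count_ge (desB xs) j) - 1)
        + 2 * (if p \<in> desB xs then 0 else 1) * int (card {j \<in> S. j < p})
        + 2 * int (card {j \<in> S. p < j}) + 1"
    unfolding des using star_sum_des_insert[OF finite_desB S, of c]
    by (simp add: insert_letter_def Let_def des c_def)
  have "card S = card {j \<in> S. j < p} + card {j \<in> S. p < j}"
    using finite_subset[OF S(1) finite_desB] S(2)
    by (subst split_less_greater[OF S(2)]) (auto intro: card_Un_disjoint)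
  then show ?thesis
    using fmaj_insert[OF a] star a(2)
    by (simp add: fmajS_eq_count_ge insert_letter_def Let_def ins_weight_def c_def split: if_splits)
qed

lemma count_ge_less:
  assumes "finite X" "p \<in> X" "p < q"
  shows "count_ge X q < count_ge X p"
proof -
  have "{x \<in> X. q \<le> x} \<subseteq> {x \<in> X. p \<le> x}" "p \<in> {x \<in> X. p \<le> x} - {x \<in> X. q \<le> x}"
    using assms(2,3) by auto
  then have "{x \<in> X. q \<le> x} \<subset> {x \<in> X. p \<le> x}"
    by blast
  then show ?thesis
    unfolding count_ge_def using assms(1) by (simp add: psubset_card_mono)
qed

lemma card_le_in_less:
  fixes p q :: "'a::linorder"
  assumes "finite X" "q \<in> X" "p < q"
  shows "card {x \<in> X. x \<le> p} < card {x \<in> X. x \<le> q}"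
proof -
  have "{x \<in> X. x \<le> p} \<subseteq> {x \<in> X. x \<le> q}" "q \<in> {x \<in> X. x \<le> q} - {x \<in> X. x \<le> p}"
    using assms(2,3) by auto
  then have "{x \<in> X. x \<le> p} \<subset> {x \<in> X. x \<le> q}"
    by blast
  then show ?thesis
    using assms(1) by (simp add: psubset_card_mono)
qed

lemma fmaj_label_descent:
  "p \<in> desB xs - S \<Longrightarrow> fmaj_label xs S p = count_ge (desB xs - S) p"
  using desB_subset[of xs] by (auto simp: fmaj_label_def count_ge_def)

lemma fmaj_label_ascent:
  "p < length xs \<Longrightarrow> p \<notin> desB xs \<Longrightarrow>
    fmaj_label xs S p = card (desB xs - S) + card {q. q < length xs \<and> q \<notin> desB xs \<and> q \<le> p}"
  by (simp add: fmaj_label_def)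

lemma fmaj_label_bounds:
  assumes S: "S \<subseteq> desB xs" and p: "p < length xs" "p \<notin> S"
  shows "p \<in> desB xs \<Longrightarrow> 1 \<le> fmaj_label xs S p \<and> fmaj_label xs S p \<le> card (desB xs - S)"
    and "p \<notin> desB xs \<Longrightarrow>
      card (desB xs - S) < fmaj_label xs S p \<and> fmaj_label xs S p \<le> length xs - card S"
proof -
  let ?D = "desB xs" and ?A = "{q. q < length xs \<and> q \<notin> desB xs}"
  show "1 \<le> fmaj_label xs S p \<and> fmaj_label xs S p \<le> card (?D - S)" if "p \<in> ?D"
    using that p(2) card_mono[of "?D - S" "{d \<in> ?D - S. p \<le> d}"]
    by (auto simp: fmaj_label_descent count_ge_def card_gt_0_iff Suc_le_eq)
  assume "p \<notin> ?D"
  have "card {q \<in> ?A. q \<le> p} \<le> card ?A"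
    by (rule card_mono) auto
  moreover have "card ?A = length xs - card ?D"
  proof -
    have "?A = {..<length xs} - ?D"
      by auto
    then show ?thesis
      using desB_subset by (simp add: card_Diff_subset)
  qed
  moreover have "card ?D \<le> length xs" "card S \<le> card ?D"
    using card_mono[OF _ desB_subset] card_mono[OF finite_desB S] by auto
  moreover have "0 < card {q \<in> ?A. q \<le> p}"
    using p(1) \<open>p \<notin> ?D\<close> by (auto simp: card_gt_0_iff)
  moreover have "fmaj_label xs S p = card (?D - S) + card {q \<in> ?A. q \<le> p}"
    using p(1) \<open>p \<notin> ?D\<close> by (simp add: fmaj_label_ascent conj_ac)
  moreover have "card (?D - S) = card ?D - card S"
    using S by (simp add: card_Diff_subset finite_subset)
  ultimately show "card (?D - S) < fmaj_label xs S p \<and> fmaj_label xs S p \<le> length xs - card S"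
    by linarith
qed

lemma inj_on_fmaj_label:
  assumes S: "S \<subseteq> desB xs"
  shows "inj_on (fmaj_label xs S) {p. p \<le> length xs \<and> p \<notin> S}"
proof (rule linorder_inj_onI')
  fix u v
  assume "u \<in> {p. p \<le> length xs \<and> p \<notin> S}" "v \<in> {p. p \<le> length xs \<and> p \<notin> S}" "u < v"
  then have u: "u < length xs" "u \<notin> S" and v: "v \<le> length xs" "v \<notin> S"
    by auto
  note bounds = fmaj_label_bounds[OF S]
  consider "v = length xs" | "v < length xs" "u \<in> desB xs" "v \<in> desB xs"
    | "v < length xs" "u \<notin> desB xs" "v \<notin> desB xs" | "v < length xs" "(u \<in> desB xs) \<noteq> (v \<in> desB xs)"
    using v(1) by linarith
  then show "fmaj_label xs S u \<noteq> fmaj_label xs S v"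
  proof cases
    case 1
    then show ?thesis
      using bounds[OF u] by (cases "u \<in> desB xs") (auto simp: fmaj_label_def)
  next
    case 2
    then show ?thesis
      using count_ge_less[of "desB xs - S" u v] u v \<open>u < v\<close> by (simp add: fmaj_label_descent)
  next
    case 3
    then show ?thesis
      using card_le_in_less[of "{q. q < length xs \<and> q \<notin> desB xs}" v u] u v \<open>u < v\<close>
      by (simp add: fmaj_label_ascent conj_ac)
  next
    case 4
    then show ?thesis
      using bounds[OF u] bounds[OF \<open>v < length xs\<close> v(2)] by (cases "u \<in> desB xs") auto
  qed
qed

lemma bij_betw_fmaj_label:
  assumes S: "S \<subseteq> desB xs"
  shows "bij_betw (fmaj_label xs S) {p. p \<le> length xs \<and> p \<notin> S} {0..length xs - card S}"
proof -
  let ?L = "fmaj_label xs S" and ?P = "{p. p \<le> length xs \<and> p \<notin> S}"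
  have card_D: "card (desB xs) \<le> length xs"
    using card_mono[OF _ desB_subset, of xs] by simp
  have "?L ` ?P \<subseteq> {0..length xs - card S}"
  proof
    fix l
    assume "l \<in> ?L ` ?P"
    then obtain p where "p \<le> length xs" "p \<notin> S" "l = ?L p"
      by auto
    then show "l \<in> {0..length xs - card S}"
      using fmaj_label_bounds[OF S, of p] card_D S
      by (cases "p = length xs"; cases "p \<in> desB xs")
        (auto simp: card_Diff_subset finite_subset fmaj_label_def)
  qed
  moreover have "card ?P = card {0..length xs - card S}"
  proof -
    have "?P = {..length xs} - S" "S \<subseteq> {..length xs}"
      using S desB_subset[of xs] by auto
    moreover have "card S \<le> length xs"
      using card_mono[OF finite_desB S] card_D by simp
    ultimately show ?thesis
      by (simp add: card_Diff_subset finite_subset)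
  qed
  ultimately show ?thesis
    using inj_on_fmaj_label[OF S] by (simp add: bij_betw_def card_image card_subset_eq)
qed

lemma label_pos_spec:
  assumes "S \<subseteq> desB xs" "i \<le> length xs - card S"
  shows "label_pos xs S i \<le> length xs" "label_pos xs S i \<notin> S"
    and "fmaj_label xs S (label_pos xs S i) = i"
proof -
  let ?P = "{p. p \<le> length xs \<and> p \<notin> S}"
  have bij: "bij_betw (fmaj_label xs S) ?P {0..length xs - card S}"
    by (rule bij_betw_fmaj_label[OF assms(1)])
  have eq: "label_pos xs S i = the_inv_into ?P (fmaj_label xs S) i"
    by (simp add: label_pos_def the_inv_into_def)
  have "i \<in> fmaj_label xs S ` ?P"
    using bij assms(2) by (simp add: bij_betw_def)
  then have "label_pos xs S i \<in> ?P"
    unfolding eq by (rule the_inv_into_into[OF bij_betw_imp_inj_on[OF bij] _ subset_refl])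
  then show "label_pos xs S i \<le> length xs" "label_pos xs S i \<notin> S"
    by auto
  show "fmaj_label xs S (label_pos xs S i) = i"
    unfolding eq using bij assms(2) by (auto intro: f_the_inv_into_f_bij_betw)
qed

lemma fmaj_label_eq_ins_weight:
  assumes S: "S \<subseteq> desB xs" and p: "p < length xs" "p \<notin> S"
  shows "int (fmaj_label xs S p) = ins_weight xs S p"
proof (cases "p \<in> desB xs")
  case True
  let ?E = "{q \<in> desB xs - S. p < q}"
  have "{q \<in> desB xs - S. p \<le> q} = insert p ?E"
    using True p(2) by auto
  then have "fmaj_label xs S p = Suc (card ?E)"
    using True p(2) by (simp add: fmaj_label_descent count_ge_def)
  moreover have "{d \<in> desB xs. p < d} = ?E \<union> {j \<in> S. p < j}"
    using S by auto
  moreover have "card (?E \<union> {j \<in> S. p < j}) = card ?E + card {j \<in> S. p < j}"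
    using finite_subset[OF S finite_desB] by (intro card_Un_disjoint) auto
  ultimately show ?thesis
    using True by (simp add: ins_weight_def)
next
  case False
  let ?D = "desB xs"
  have "{q. q < length xs \<and> q \<notin> ?D \<and> q \<le> p} = {..p} - {d \<in> ?D. d < p}"
    using False p(1) by auto
  moreover have "card ({..p} - {d \<in> ?D. d < p}) = Suc p - card {d \<in> ?D. d < p}"
    by (subst card_Diff_subset) auto
  moreover have "card {d \<in> ?D. d < p} \<le> Suc p"
    using card_mono[of "{..p}" "{d \<in> ?D. d < p}"] by force
  moreover have "card ?D = card {d \<in> ?D. d < p} + card {d \<in> ?D. p < d}"
    using False by (subst split_less_greater[OF False]) (auto intro: card_Un_disjoint)
  moreover have "card (?D - S) = card ?D - card S" "card S \<le> card ?D"
    using S by (auto simp: card_Diff_subset finite_subset card_mono)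
  ultimately show ?thesis
    using False p(1) by (simp add: fmaj_label_ascent ins_weight_def)
qed

lemma ins_weight_length: "ins_weight xs S (length xs) = int (length xs) + 1 - int (card S)"
  using desB_subset[of xs] by (auto simp: ins_weight_def)

lemma signed_perm_letters:
  "xs \<in> signed_perms m \<Longrightarrow> length xs = m \<and> (\<forall>x\<in>set xs. \<bar>x\<bar> < int (Suc m))"
  by (force simp: signed_perms_def)

lemma fmajS_phi_star:
  assumes xs: "xs \<in> signed_perms m" and S: "S \<subseteq> desB xs"
    and a: "a = int (Suc m) \<or> a = - int (Suc m)" and i: "1 \<le> i" "i \<le> m - card S"
  shows "fmajS (phi_star a i (xs, S)) = fmajS (xs, S) + 2 * int i - (if 0 < a then 1 else 2)"
proof -
  define p where "p = label_pos xs S i"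
  have len: "length xs = m" and small: "\<forall>x\<in>set xs. \<bar>x\<bar> < \<bar>a\<bar>"
    using signed_perm_letters[OF xs] a by auto
  have p: "p \<le> m" "p \<notin> S" "fmaj_label xs S p = i"
    using label_pos_spec[OF S, of i] i len by (auto simp: p_def)
  then have "p \<noteq> m"
    using i(1) len by (auto simp: fmaj_label_def)
  with p have "p < length xs"
    using len by simp
  then show ?thesis
    using fmajS_insert_letter[OF S p(2), of a] fmaj_label_eq_ins_weight[OF S _ p(2)] small a p(3)
    by (auto simp: phi_star_eq_insert_letter p_def[symmetric])
qed

lemma fmajS_phi_star_zero:
  assumes xs: "xs \<in> signed_perms m" and S: "S \<subseteq> desB xs"
  shows "fmajS (phi_star (- int (Suc m)) 0 (xs, S)) = fmajS (xs, S) + 2 * int m - 2 * int (card S)"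
proof -
  define p where "p = label_pos xs S 0"
  have len: "length xs = m" and small: "\<forall>x\<in>set xs. \<bar>x\<bar> < \<bar>- int (Suc m)\<bar>"
    using signed_perm_letters[OF xs] by auto
  have p: "p \<le> m" "p \<notin> S" "fmaj_label xs S p = 0"
    using label_pos_spec[OF S, of 0] len by (auto simp: p_def)
  have "p = m"
    using fmaj_label_bounds[OF S, of p] p len by (cases "p \<in> desB xs") (auto simp: le_less)
  then show ?thesis
    using fmajS_insert_letter[OF S p(2), of "- int (Suc m)"] ins_weight_length[of xs S] small len
    by (simp add: phi_star_eq_insert_letter p_def[symmetric])
qed

theorem lemma2p6:
  fixes n k :: nat and xs :: "int list" and S :: "nat set"
  assumes "1 \<le> k" and "k \<le> n" and "(xs, S) \<in> Bgt (n - 1) (k - 1)"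
  shows "(\<forall>i\<in>{1..n - k}. fmajS (phi_star (int n) i (xs, S)) = fmajS (xs, S) + 2 * int i - 1)
       \<and> (\<forall>i\<in>{1..n - k}. fmajS (phi_star (- int n) i (xs, S)) = fmajS (xs, S) + 2 * int i - 2)
       \<and> fmajS (phi_star (- int n) 0 (xs, S)) = fmajS (xs, S) + 2 * int n - 2 * int k"
proof -
  obtain m where n: "n = Suc m"
    using assms(1,2) by (cases n) auto
  have xs: "xs \<in> signed_perms m" and S: "S \<subseteq> desB xs" and card_S: "card S = k - 1"
    using assms(3) by (auto simp: Bgt_def n)
  have "n - k = m - card S"
    using card_S n assms(1) by simp
  then show ?thesis
    using fmajS_phi_star[OF xs S, of "int n"] fmajS_phi_star[OF xs S, of "- int n"]
      fmajS_phi_star_zero[OF xs S] card_S n assms(1)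
    by auto
qed

end
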